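(* Let $k$ and $n$ be positive integers, and let $\mathcal{P}$ be a partition of $\mathbb{R}^k$ into polytopes. Then there exist a polytope $P_0\in\mathcal{P}$ and a point $\mathbf{w}=(w_1,\dots,w_n)\in(0,1)^n$ such that $w_1>w_2>\dots>w_n$ and, for every ascending $k$-tuple of indices $1\le i_1<\dots<i_k\le n$, the point $(w_{i_1},\dots,w_{i_k})$ lies in the interior of $P_0$.
   Context: A (closed, convex) polytope in $\mathbb{R}^k$ is a set of the form $\{\mathbf{x}\in\mathbb{R}^k : \mathbf{a}_j\cdot\mathbf{x}+b_j\ge 0,\ j=1,\dots,J\}$ for finitely many $\mathbf{a}_j\in\mathbb{R}^k$, $b_j\in\mathbb{R}$ (not necessarily bounded). A partition of $\mathbb{R}^k$ is a finite collection of polytopes, each with nonempty interior, whose union is $\mathbb{R}^k$ and whose interiors are pairwise disjoint. *)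

theory Defs
  imports "HOL-Analysis.Analysis"
begin

text \<open>A closed convex polytope: intersection of finitely many closed half-spaces
  given by affine inequalities a \<bullet> x + b \<ge> 0 (not necessarily bounded).\<close>
definition polytope :: "('a::euclidean_space) set \<Rightarrow> bool" where
  "polytope S \<longleftrightarrow> (\<exists>H :: ('a \<times> real) set. finite H \<and>
      S = {x. \<forall>(a, b) \<in> H. a \<bullet> x + b \<ge> 0})"

definition polytope_partition :: "('a::euclidean_space) set set \<Rightarrow> bool" where
  "polytope_partition \<P> \<longleftrightarrow> finite \<P>
     \<and> (\<forall>P \<in> \<P>. polytope P \<and> interior P \<noteq> {})
     \<and> \<Union>\<P> = UNIV
     \<and> (\<forall>P \<in> \<P>. \<forall>Q \<in> \<P>. P \<noteq> Q \<longrightarrow> interior P \<inter> interior Q = {})"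

end

theory Submission
  imports Defs
begin

text \<open>For small \<open>e > 0\<close> consider the region \<open>lex_small e\<close> of points with coordinates in
  \<open>(0, e]\<close>, each at most \<open>e\<close> times its predecessor. A nonzero affine function
  \<open>a \<bullet> x + b\<close> has constant sign there once \<open>e\<close> is small: it is dominated by \<open>b\<close> if
  \<open>b \<noteq> 0\<close>, and otherwise by the term \<open>a\<^sub>m x\<^sub>m\<close> of its first nonzero coefficient.
  Taking \<open>e\<close> below the thresholds of all the finitely many inequalities defining the
  polytopes, every polytope meeting \<open>lex_small e\<close> satisfies all its nontrivial defining
  inequalities strictly on it, so \<open>lex_small e\<close> lies in its interior. With
  \<open>w\<^sub>i = e\<^sup>i\<^sup>+\<^sup>1\<close>, all ascending subtuples of \<open>w\<close> lie in \<open>lex_small e\<close>.\<close>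

definition lex_small :: "real \<Rightarrow> (real ^ 'k::{finite, linorder}) set" where
  "lex_small e = {x. (\<forall>j. 0 < x$j \<and> x$j \<le> e) \<and> (\<forall>i j. i < j \<longrightarrow> x$j \<le> e * x$i)}"

lemma power_tuple_in_lex_small:
  fixes s :: "'k::{finite, linorder} \<Rightarrow> nat"
  assumes "strict_mono s" "0 < e" "e < 1"
  shows "(\<chi> j. e ^ (s j + 1)) \<in> lex_small e"
proof -
  have "e ^ (s j + 1) \<le> e" for j
    using assms by (simp add: mult_left_le power_le_one)
  moreover have "e ^ (s j + 1) \<le> e * e ^ (s i + 1)" if "i < j" for i j
  proof -
    have "s i + 2 \<le> s j + 1"
      using strict_monoD[OF \<open>strict_mono s\<close> that] by simp
    then have "e ^ (s j + 1) \<le> e ^ (s i + 2)"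
      using assms by (intro power_decreasing) auto
    then show ?thesis by simp
  qed
  ultimately show ?thesis
    using \<open>0 < e\<close> by (simp add: lex_small_def)
qed

lemma strict_mono_card_lessThan: "strict_mono (\<lambda>j::'a::{finite, linorder}. card {..<j})"
  by (rule strict_monoI) (auto intro!: psubset_card_mono)

lemma abs_inner_lex_small_le:
  fixes a x :: "real ^ 'k::{finite, linorder}"
  assumes "x \<in> lex_small e"
  shows "\<bar>a \<bullet> x\<bar> \<le> (\<Sum>j\<in>UNIV. \<bar>a$j\<bar>) * e"
proof -
  have "\<bar>a \<bullet> x\<bar> \<le> (\<Sum>j\<in>UNIV. \<bar>a$j * x$j\<bar>)"
    unfolding inner_vec_def inner_real_def by (rule sum_abs)
  also have "\<dots> \<le> (\<Sum>j\<in>UNIV. \<bar>a$j\<bar> * e)"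
  proof (rule sum_mono)
    fix j
    have "0 < x$j" "x$j \<le> e"
      using assms by (auto simp: lex_small_def)
    then show "\<bar>a$j * x$j\<bar> \<le> \<bar>a$j\<bar> * e"
      by (simp add: abs_mult mult_left_mono)
  qed
  finally show ?thesis
    by (simp add: sum_distrib_right)
qed

lemma abs_inner_lex_small_leading:
  fixes a x :: "real ^ 'k::{finite, linorder}"
  assumes x: "x \<in> lex_small e" and below: "\<forall>j<m. a$j = 0"
  shows "\<bar>a \<bullet> x - a$m * x$m\<bar> \<le> (\<Sum>j\<in>UNIV. \<bar>a$j\<bar>) * e * x$m"
proof -
  have "0 < x$m" "0 < e"
    using x by (auto simp: lex_small_def dest: order.strict_trans2)
  have term_le: "\<bar>a$j * x$j\<bar> \<le> \<bar>a$j\<bar> * (e * x$m)" if "j \<noteq> m" for j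
  proof (cases "j < m")
    case False
    with \<open>j \<noteq> m\<close> have "m < j"
      by simp
    then have "x$j \<le> e * x$m" "0 < x$j"
      using x by (auto simp: lex_small_def)
    then show ?thesis by (simp add: abs_mult mult_left_mono)
  qed (simp add: below)
  have "a \<bullet> x - a$m * x$m = (\<Sum>j\<in>UNIV - {m}. a$j * x$j)"
    by (simp add: inner_vec_def sum.remove[of UNIV m])
  also have "\<bar>\<dots>\<bar> \<le> (\<Sum>j\<in>UNIV - {m}. \<bar>a$j * x$j\<bar>)"
    by (rule sum_abs)
  also have "\<dots> \<le> (\<Sum>j\<in>UNIV - {m}. \<bar>a$j\<bar> * (e * x$m))"
    using term_le by (intro sum_mono) auto
  also have "\<dots> \<le> (\<Sum>j\<in>UNIV. \<bar>a$j\<bar> * (e * x$m))"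
    using \<open>0 < x$m\<close> \<open>0 < e\<close> by (intro sum_mono2) auto
  finally show ?thesis
    by (simp add: sum_distrib_right mult.assoc)
qed

lemma eventually_at_right_0_mult_less:
  fixes M c :: real
  assumes "0 < c"
  shows "\<forall>\<^sub>F e in at_right 0. M * e < c"
proof -
  have "((\<lambda>e. M * e) \<longlongrightarrow> M * 0) (at_right 0)"
    by (intro tendsto_intros)
  then show ?thesis
    using assms by (auto dest: order_tendstoD(2))
qed

lemma sgn_eq_if_abs_diff_less:
  fixes y c :: real
  assumes "\<bar>y - c\<bar> < \<bar>c\<bar>"
  shows "sgn y = sgn c"
  using assms by (cases "0 < c") (auto simp: sgn_if abs_less_iff)

lemma eventually_at_right_0_less_1: "\<forall>\<^sub>F e in at_right 0. 0 < e \<and> e < (1::real)"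
  using eventually_at_right_less order_tendstoD(2)[OF tendsto_ident_at zero_less_one]
  by (rule eventually_conj)

lemma eventually_lex_small_sgn_const_term:
  fixes a :: "real ^ 'k::{finite, linorder}"
  assumes "b \<noteq> 0"
  shows "\<forall>\<^sub>F e in at_right 0. \<forall>x \<in> lex_small e. sgn (a \<bullet> x + b) = sgn b"
proof -
  have "\<forall>\<^sub>F e in at_right 0. (\<Sum>j\<in>UNIV. \<bar>a$j\<bar>) * e < \<bar>b\<bar>"
    using assms by (intro eventually_at_right_0_mult_less) simp
  then show ?thesis
  proof (rule eventually_mono, intro ballI)
    fix e and x :: "real ^ 'k::{finite, linorder}"
    assume "(\<Sum>j\<in>UNIV. \<bar>a$j\<bar>) * e < \<bar>b\<bar>" "x \<in> lex_small e"
    then have "\<bar>a \<bullet> x\<bar> < \<bar>b\<bar>"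
      using abs_inner_lex_small_le[of x e a] by linarith
    then show "sgn (a \<bullet> x + b) = sgn b"
      by (simp add: sgn_eq_if_abs_diff_less)
  qed
qed

lemma eventually_lex_small_sgn_leading:
  fixes a :: "real ^ 'k::{finite, linorder}"
  assumes "a$m \<noteq> 0" and below: "\<forall>j<m. a$j = 0"
  shows "\<forall>\<^sub>F e in at_right 0. \<forall>x \<in> lex_small e. sgn (a \<bullet> x) = sgn (a$m)"
proof -
  have "\<forall>\<^sub>F e in at_right 0. (\<Sum>j\<in>UNIV. \<bar>a$j\<bar>) * e < \<bar>a$m\<bar>"
    using assms by (intro eventually_at_right_0_mult_less) simp
  then show ?thesis
  proof (rule eventually_mono, intro ballI)
    fix e and x :: "real ^ 'k::{finite, linorder}"
    assume small: "(\<Sum>j\<in>UNIV. \<bar>a$j\<bar>) * e < \<bar>a$m\<bar>" and x: "x \<in> lex_small e"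
    have "0 < x$m"
      using x by (auto simp: lex_small_def)
    have "(\<Sum>j\<in>UNIV. \<bar>a$j\<bar>) * e * x$m < \<bar>a$m * x$m\<bar>"
      using mult_strict_right_mono[OF small \<open>0 < x$m\<close>] \<open>0 < x$m\<close> by (simp add: abs_mult)
    then have "\<bar>a \<bullet> x - a$m * x$m\<bar> < \<bar>a$m * x$m\<bar>"
      using abs_inner_lex_small_leading[OF x below] by linarith
    then show "sgn (a \<bullet> x) = sgn (a$m)"
      using \<open>0 < x$m\<close> by (simp add: sgn_eq_if_abs_diff_less sgn_mult)
  qed
qed

lemma sign_definite_if_sgn_const:
  fixes f :: "'a \<Rightarrow> real"
  assumes "\<forall>x\<in>S. sgn (f x) = sgn c" "c \<noteq> 0"
  shows "(\<forall>x\<in>S. 0 < f x) \<or> (\<forall>x\<in>S. f x < 0)"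
  using assms by (cases "0 < c") (auto simp: sgn_if split: if_splits)

lemma eventually_lex_small_sign_definite:
  fixes a :: "real ^ 'k::{finite, linorder}"
  assumes "(a, b) \<noteq> (0, 0)"
  shows "\<forall>\<^sub>F e in at_right 0.
           (\<forall>x \<in> lex_small e. 0 < a \<bullet> x + b) \<or> (\<forall>x \<in> lex_small e. a \<bullet> x + b < 0)"
proof (cases "b = 0")
  case False
  show ?thesis
    using eventually_lex_small_sgn_const_term[OF False]
    by (rule eventually_mono) (rule sign_definite_if_sgn_const[OF _ False])
next
  case True
  with assms have "a \<noteq> 0"
    by simp
  then obtain j0 where "a$j0 \<noteq> 0"
    by (metis vec_eq_iff zero_index)
  define m where "m = Min {j. a$j \<noteq> 0}"
  have "a$m \<noteq> 0"
    unfolding m_def using \<open>a$j0 \<noteq> 0\<close>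
    by (metis (mono_tags) Min_in empty_iff finite mem_Collect_eq)
  moreover have "\<forall>j<m. a$j = 0"
    unfolding m_def by (metis (mono_tags) Min_le finite mem_Collect_eq not_le)
  ultimately have "\<forall>\<^sub>F e in at_right 0. \<forall>x \<in> lex_small e. sgn (a \<bullet> x) = sgn (a$m)"
    by (rule eventually_lex_small_sgn_leading)
  then show ?thesis
    unfolding True add_0_right
    by (rule eventually_mono) (rule sign_definite_if_sgn_const[OF _ \<open>a$m \<noteq> 0\<close>])
qed

lemma subset_interior_polytope:
  fixes H :: "('a::euclidean_space \<times> real) set"
  assumes "finite H" and P: "P = {x. \<forall>(a, b) \<in> H. a \<bullet> x + b \<ge> 0}" and "p \<in> G" "p \<in> P"
    and definite: "\<And>a b. (a, b) \<in> H \<Longrightarrow> (a, b) \<noteq> (0, 0) \<Longrightarrow>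
                     (\<forall>x\<in>G. 0 < a \<bullet> x + b) \<or> (\<forall>x\<in>G. a \<bullet> x + b < 0)"
  shows "G \<subseteq> interior P"
proof -
  define U where "U = (\<Inter>(a, b) \<in> H - {(0, 0)}. {x. 0 < a \<bullet> x + b})"
  have "open U"
    unfolding U_def using \<open>finite H\<close>
    by (intro open_INT) (auto intro!: open_Collect_less continuous_intros)
  moreover have "U \<subseteq> P"
  proof
    fix x assume "x \<in> U"
    have "0 \<le> a \<bullet> x + b" if "(a, b) \<in> H" for a b
    proof (cases "(a, b) = (0, 0)")
      case False
      with \<open>x \<in> U\<close> that show ?thesis
        unfolding U_def by (auto dest!: bspec[of _ _ "(a, b)"])
    qed simp
    then show "x \<in> P"
      unfolding P by blast
  qed
  moreover have "G \<subseteq> U"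
  proof -
    have "\<forall>x\<in>G. 0 < a \<bullet> x + b" if "(a, b) \<in> H" "(a, b) \<noteq> (0, 0)" for a b
      using definite[OF that] \<open>p \<in> G\<close> \<open>p \<in> P\<close> that(1) unfolding P by fastforce
    then show ?thesis
      unfolding U_def by blast
  qed
  ultimately show ?thesis
    using interior_maximal by blast
qed

lemma eventually_lex_small_subset_interior:
  fixes \<P> :: "(real ^ 'k::{finite, linorder}) set set"
  assumes "polytope_partition \<P>"
  shows "\<forall>\<^sub>F e in at_right 0. \<exists>P0\<in>\<P>. lex_small e \<subseteq> interior P0"
proof -
  have "finite \<P>" and cover: "\<Union>\<P> = UNIV"
    using assms by (auto simp: polytope_partition_def)
  have "\<forall>P\<in>\<P>. \<exists>H. finite H \<and> P = {x. \<forall>(a, b) \<in> H. a \<bullet> x + b \<ge> 0}"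
    using assms by (auto simp: polytope_partition_def polytope_def)
  then obtain H where H: "\<forall>P\<in>\<P>. finite (H P) \<and> P = {x. \<forall>(a, b) \<in> H P. a \<bullet> x + b \<ge> 0}"
    by (rule bchoice[elim_format]) blast
  define HH where "HH = (\<Union>P\<in>\<P>. H P) - {(0, 0)}"
  have "finite HH"
    unfolding HH_def using \<open>finite \<P>\<close> H by auto
  have "\<forall>\<^sub>F e in at_right 0. \<forall>(a, b) \<in> HH.
          (\<forall>x \<in> lex_small e. 0 < a \<bullet> x + b) \<or> (\<forall>x \<in> lex_small e. a \<bullet> x + b < 0)"
    using \<open>finite HH\<close>
    by (intro eventually_ball_finite) (auto simp: HH_def intro: eventually_lex_small_sign_definite)
  with eventually_at_right_0_less_1 show ?thesis
  proof (rule eventually_elim2)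
    fix e :: real
    assume "0 < e \<and> e < 1" and definite: "\<forall>(a, b) \<in> HH.
          (\<forall>x \<in> lex_small e. 0 < a \<bullet> x + b) \<or> (\<forall>x \<in> lex_small e. a \<bullet> x + b < 0)"
    define p :: "real ^ 'k::{finite, linorder}" where "p = (\<chi> j. e ^ (card {..<j} + 1))"
    have "p \<in> lex_small e"
      unfolding p_def using strict_mono_card_lessThan \<open>0 < e \<and> e < 1\<close>
      by (intro power_tuple_in_lex_small) auto
    obtain P0 where "P0 \<in> \<P>" "p \<in> P0"
      using cover by blast
    have "lex_small e \<subseteq> interior P0"
    proof (rule subset_interior_polytope[of "H P0"])
      show "finite (H P0)" "P0 = {x. \<forall>(a, b) \<in> H P0. a \<bullet> x + b \<ge> 0}"
        using H \<open>P0 \<in> \<P>\<close> by auto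
      show "(\<forall>x \<in> lex_small e. 0 < a \<bullet> x + b) \<or> (\<forall>x \<in> lex_small e. a \<bullet> x + b < 0)"
        if "(a, b) \<in> H P0" "(a, b) \<noteq> (0, 0)" for a b
        using definite that \<open>P0 \<in> \<P>\<close> unfolding HH_def by blast
    qed fact+
    with \<open>P0 \<in> \<P>\<close> show "\<exists>P0\<in>\<P>. lex_small e \<subseteq> interior P0"
      by blast
  qed
qed

theorem theorem3p2:
  fixes \<P> :: "(real ^ ('k::{finite, linorder})) set set" and n :: nat
  assumes "n \<ge> 1"
    and "polytope_partition \<P>"
  shows "\<exists>P0 \<in> \<P>. \<exists>w :: nat \<Rightarrow> real.
           (\<forall>i < n. 0 < w i \<and> w i < 1)
         \<and> (\<forall>i j. i < j \<and> j < n \<longrightarrow> w j < w i)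
         \<and> (\<forall>s :: 'k \<Rightarrow> nat. strict_mono s \<and> (\<forall>j. s j < n)
               \<longrightarrow> (\<chi> j. w (s j)) \<in> interior P0)"
proof -
  have "\<forall>\<^sub>F e in at_right 0. (0 < e \<and> e < 1) \<and> (\<exists>P0\<in>\<P>. lex_small e \<subseteq> interior P0)"
    using eventually_at_right_0_less_1 eventually_lex_small_subset_interior[OF assms(2)]
    by (rule eventually_conj)
  then obtain e P0 where "0 < e" "e < 1" "P0 \<in> \<P>" and small: "lex_small e \<subseteq> interior P0"
    using eventually_happens' trivial_limit_at_right_real by blast
  show ?thesis
  proof (intro bexI[OF _ \<open>P0 \<in> \<P>\<close>] exI[of _ "\<lambda>i. e ^ (i + 1)"] conjI allI impI)
    fix i :: nat
    show "0 < e ^ (i + 1)" "e ^ (i + 1) < 1"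
      using \<open>0 < e\<close> \<open>e < 1\<close> power_Suc_less_one[of e i] by simp_all
  next
    fix i j :: nat assume "i < j \<and> j < n"
    then show "e ^ (j + 1) < e ^ (i + 1)"
      using \<open>0 < e\<close> \<open>e < 1\<close> by (intro power_strict_decreasing) auto
  next
    fix s :: "'k \<Rightarrow> nat" assume "strict_mono s \<and> (\<forall>j. s j < n)"
    then show "(\<chi> j. e ^ (s j + 1)) \<in> interior P0"
      using power_tuple_in_lex_small \<open>0 < e\<close> \<open>e < 1\<close> small by blast
  qed
qed

end
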